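(* Let $\Theta$ be a convex overmarked box and $(\varepsilon,\delta)\in\mathbb{R}^2$. Then the convex interior of $\sigma_{(\varepsilon,\delta)}(\Theta)$ is contained in the convex interior of $\Theta$ if and only if $(\varepsilon,\delta)\in\mathcal{R}$.
   Context: Let $V$ be a 3-dimensional real vector space. An overmarked box is $\Theta=((p,q,r,s;t,b),(P,Q,R,S;T,B))$ with $p,\dots,b\in\mathbf{P}(V)$ and lines $P,\dots,B$ of $\mathbf{P}(V)$ such that $P=ts$, $Q=tr$, $R=bq$, $S=bp$, $T=pq$, $B=rs$ (here $xy$ is the line through $x,y$) and $T\cap B\notin\{p,q,r,s,t,b\}$. A $\Theta$-basis is a basis of $V$, unique up to scaling, in which $p=[-1:1:0]$, $q=[1:1:0]$, $r=[1:0:1]$, $s=[-1:0:1]$; then $t=[\zeta_t:1:0]$ and $b=[\zeta_b:0:1]$; $\Theta$ is convex iff $\zeta_t,\zeta_b\in\,]-1,1[$. The convex interior of a convex $\Theta$ is the interior of the convex quadrilateral with vertices $p,q,r,s$ (in this cyclic order) whose sides $[pq]\ni t$ and $[rs]\ni b$; in $\Theta$-basis coordinates it is $\{[x:y:z]: y+z\ne0,\ |x|<|y+z|,\ |y-z|<|y+z|\}$. For $(\varepsilon,\delta)\in\mathbb{R}^2$ let $$\Sigma_{(\varepsilon,\delta)}=\begin{pmatrix}1&0&0\\0&e^{-\delta}\cosh\varepsilon&-\sinh\varepsilon\\0&-\sinh\varepsilon&e^{\delta}\cosh\varepsilon\end{pmatrix},$$ and $\sigma_{(\varepsilon,\delta)}(\Theta)$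 the image of $\Theta$ under the projective transformation with matrix $\Sigma_{(\varepsilon,\delta)}$ in a $\Theta$-basis (its convex interior is the image of that of $\Theta$). Let $f(\varepsilon,\delta)=e^{-\delta}\cosh\varepsilon-\sinh\varepsilon-1$ and $\mathcal{R}=\{(\varepsilon,\delta)\in\mathbb{R}^2:f(\varepsilon,\delta)\ge0,\ f(\varepsilon,-\delta)\ge0\}$. *)

theory Defs
  imports "HOL-Analysis.Analysis"
begin

text \<open>The 3-dimensional real vector space V is modelled as real^3.
 A point of P(V) is represented by a nonzero vector, a line of P(V) by a
 nonzero covector (also in real^3); incidence is vanishing of the pairing.\<close>

definition proj_eq :: "real^3 \<Rightarrow> real^3 \<Rightarrow> bool" where
  "proj_eq x y \<longleftrightarrow> x \<noteq> 0 \<and> y \<noteq> 0 \<and> (\<exists>c. c \<noteq> 0 \<and> x = c *\<^sub>R y)"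

definition incident :: "real^3 \<Rightarrow> real^3 \<Rightarrow> bool" where
  "incident x L \<longleftrightarrow> x \<bullet> L = 0"

definition is_join :: "real^3 \<Rightarrow> real^3 \<Rightarrow> real^3 \<Rightarrow> bool" where
  "is_join L x y \<longleftrightarrow> L \<noteq> 0 \<and> x \<noteq> 0 \<and> y \<noteq> 0 \<and> \<not> proj_eq x y \<and> incident x L \<and> incident y L"

definition overmarked_box ::
  "real^3 \<Rightarrow> real^3 \<Rightarrow> real^3 \<Rightarrow> real^3 \<Rightarrow> real^3 \<Rightarrow> real^3 \<Rightarrow>
   real^3 \<Rightarrow> real^3 \<Rightarrow> real^3 \<Rightarrow> real^3 \<Rightarrow> real^3 \<Rightarrow> real^3 \<Rightarrow> bool" where
  "overmarked_box p q r s t b P Q R S T B \<longleftrightarrow>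
     is_join P t s \<and> is_join Q t r \<and> is_join R b q \<and> is_join S b p \<and>
     is_join T p q \<and> is_join B r s \<and>
     \<not> proj_eq T B \<and>
     (\<forall>z. z \<noteq> 0 \<and> incident z T \<and> incident z B \<longrightarrow>
        (\<forall>w\<in>{p,q,r,s,t,b}. \<not> proj_eq z w))"

text \<open>M (columns = basis vectors) is a Theta-basis: coordinates of x are matrix_inv M *v x.\<close>
definition theta_basis :: "real^3^3 \<Rightarrow> real^3 \<Rightarrow> real^3 \<Rightarrow> real^3 \<Rightarrow> real^3 \<Rightarrow> bool" where
  "theta_basis M p q r s \<longleftrightarrow> invertible M \<and>
     proj_eq p (M *v vector [-1, 1, 0]) \<and>
     proj_eq q (M *v vector [1, 1, 0]) \<and>
     proj_eq r (M *v vector [1, 0, 1]) \<and>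
     proj_eq s (M *v vector [-1, 0, 1])"

definition convex_box :: "real^3^3 \<Rightarrow> real^3 \<Rightarrow> real^3 \<Rightarrow> bool" where
  "convex_box M t b \<longleftrightarrow> (\<exists>zt zb. -1 < zt \<and> zt < 1 \<and> -1 < zb \<and> zb < 1 \<and>
     proj_eq t (M *v vector [zt, 1, 0]) \<and> proj_eq b (M *v vector [zb, 0, 1]))"

definition convex_interior :: "real^3^3 \<Rightarrow> (real^3) set" where
  "convex_interior M = {v. let c = matrix_inv M *v v in
      c$2 + c$3 \<noteq> 0 \<and> \<bar>c$1\<bar> < \<bar>c$2 + c$3\<bar> \<and> \<bar>c$2 - c$3\<bar> < \<bar>c$2 + c$3\<bar>}"

definition Sigma_mat :: "real \<Rightarrow> real \<Rightarrow> real^3^3" where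
  "Sigma_mat \<epsilon> \<delta> = vector [vector [1, 0, 0],
                               vector [0, exp (-\<delta>) * cosh \<epsilon>, - sinh \<epsilon>],
                               vector [0, - sinh \<epsilon>, exp \<delta> * cosh \<epsilon>]]"

definition sigma_map :: "real^3^3 \<Rightarrow> real \<Rightarrow> real \<Rightarrow> real^3 \<Rightarrow> real^3" where
  "sigma_map M \<epsilon> \<delta> v = (M ** Sigma_mat \<epsilon> \<delta> ** matrix_inv M) *v v"

definition f_fun :: "real \<Rightarrow> real \<Rightarrow> real" where
  "f_fun \<epsilon> \<delta> = exp (-\<delta>) * cosh \<epsilon> - sinh \<epsilon> - 1"

definition region_R :: "(real \<times> real) set" where
  "region_R = {(\<epsilon>, \<delta>). f_fun \<epsilon> \<delta> \<ge> 0 \<and> f_fun \<epsilon> (-\<delta>) \<ge> 0}"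

end

theory Submission imports Defs begin

text \<open>In \<open>\<Theta>\<close>-basis coordinates \<open>(x, y, z)\<close> the convex interior is the cone
  \<open>y z > 0, |x| < |y + z|\<close>, and \<open>\<Sigma>\<close> fixes \<open>x\<close> while acting on \<open>(y, z)\<close> by the
  symmetric matrix \<open>[[a, -s], [-s, d]]\<close> with \<open>a = e\<^sup>-\<^sup>\<delta> cosh \<epsilon>\<close>, \<open>d = e\<^sup>\<delta> cosh \<epsilon>\<close>,
  \<open>s = sinh \<epsilon>\<close>, so \<open>a d = 1 + s\<^sup>2\<close>.  Such a map preserves the cone iff \<open>a - s \<ge> 1\<close> and
  \<open>d - s \<ge> 1\<close>, i.e. iff \<open>(\<epsilon>, \<delta>) \<in> \<R>\<close>.  Sufficiency: the two inequalities force
  \<open>s \<le> 0\<close>, so the open quadrant is mapped into itself, and the new \<open>y + z\<close> equals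
  \<open>(a - s) y + (d - s) z \<ge> y + z\<close>.  Necessity: a point \<open>(0, 1, \<eta>)\<close> with suitable
  \<open>\<eta> > 0\<close> leaves the quadrant unless \<open>s \<le> 0\<close>, and the points \<open>(1, 1, \<eta>)\<close> with
  \<open>\<eta> \<rightarrow> 0\<close> give \<open>a - s \<ge> 1\<close>; the other inequality follows by exchanging \<open>y\<close> and \<open>z\<close>.\<close>

definition box_cone :: "real \<Rightarrow> real \<Rightarrow> real \<Rightarrow> bool" where
  "box_cone x y z \<longleftrightarrow> 0 < y * z \<and> \<bar>x\<bar> < \<bar>y + z\<bar>"

definition preserves_box_cone :: "real \<Rightarrow> real \<Rightarrow> real \<Rightarrow> bool" where
  "preserves_box_cone a s d \<longleftrightarrow>
     (\<forall>x y z. box_cone x y z \<longrightarrow> box_cone x (a * y - s * z) (d * z - s * y))"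

lemma abs_diff_less_abs_add_iff:
  fixes y z :: "'a::linordered_idom"
  shows "\<bar>y - z\<bar> < \<bar>y + z\<bar> \<longleftrightarrow> 0 < y * z"
proof -
  have "\<bar>y - z\<bar> < \<bar>y + z\<bar> \<longleftrightarrow> (y - z)\<^sup>2 < (y + z)\<^sup>2"
    by (simp add: abs_le_square_iff flip: not_le)
  also have "(y + z)\<^sup>2 = (y - z)\<^sup>2 + 4 * (y * z)"
    by (simp add: power2_eq_square algebra_simps)
  finally show ?thesis
    by simp
qed

lemma box_cone_swap: "box_cone x y z \<longleftrightarrow> box_cone x z y"
  by (simp add: box_cone_def mult.commute add.commute)

lemma box_cone_uminus: "box_cone x (- y) (- z) \<longleftrightarrow> box_cone x y z"
  unfolding box_cone_def by (metis abs_minus_cancel minus_add_distrib minus_mult_minus)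

lemma preserves_box_cone_swap:
  "preserves_box_cone a s d \<Longrightarrow> preserves_box_cone d s a"
  unfolding preserves_box_cone_def by (metis box_cone_swap)

lemma preserves_box_cone_imp_nonpos:
  assumes pres: "preserves_box_cone a s d"
    and det: "a * d = 1 + s\<^sup>2" and "0 < d"
  shows "s \<le> 0"
proof (rule ccontr)
  assume "\<not> s \<le> 0"
  then have "0 < s" by simp
  define \<eta> where "\<eta> = s / (2 * d)"
  have "0 < \<eta>"
    using \<open>0 < s\<close> \<open>0 < d\<close> by (simp add: \<eta>_def)
  then have "box_cone 0 1 \<eta>"
    by (simp add: box_cone_def)
  then have "box_cone 0 (a - s * \<eta>) (d * \<eta> - s)"
    using pres unfolding preserves_box_cone_def by (metis mult_1_right)
  then have image_in_cone: "0 < (a - s * \<eta>) * (d * \<eta> - s)"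
    by (simp add: box_cone_def)
  \<comment> \<open>the first coordinate stays positive because \<open>s\<^sup>2 < a d\<close>, the second becomes \<open>-s/2\<close>\<close>
  have "a - s * \<eta> = (2 + s\<^sup>2) / (2 * d)"
    using \<open>0 < d\<close> det by (simp add: \<eta>_def field_simps power2_eq_square)
  moreover have "d * \<eta> - s = - s / 2"
    using \<open>0 < d\<close> by (simp add: \<eta>_def field_simps)
  ultimately have "(a - s * \<eta>) * (d * \<eta> - s) < 0"
    using \<open>0 < s\<close> \<open>0 < d\<close> by (simp add: mult_pos_neg add_pos_nonneg)
  with image_in_cone show False
    by simp
qed

lemma preserves_box_cone_imp_ge:
  assumes pres: "preserves_box_cone a s d"
    and det: "a * d = 1 + s\<^sup>2" and "0 < a" "0 < d"
  shows "1 \<le> a - s"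
proof (rule field_le_epsilon)
  fix e :: real
  assume "0 < e"
  have "s \<le> 0"
    using preserves_box_cone_imp_nonpos[OF pres det \<open>0 < d\<close>] .
  define \<eta> where "\<eta> = e / (d - s)"
  have "0 < \<eta>" and e_eq: "(d - s) * \<eta> = e"
    using \<open>0 < e\<close> \<open>0 < d\<close> \<open>s \<le> 0\<close> by (simp_all add: \<eta>_def)
  then have "box_cone 1 1 \<eta>"
    by (simp add: box_cone_def)
  then have "box_cone 1 (a - s * \<eta>) (d * \<eta> - s)"
    using pres unfolding preserves_box_cone_def by (metis mult_1_right)
  then have "1 < \<bar>(a - s * \<eta>) + (d * \<eta> - s)\<bar>"
    by (simp add: box_cone_def)
  also have "(a - s * \<eta>) + (d * \<eta> - s) = (a - s) + e"
    using e_eq by (simp add: algebra_simps)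
  also have "\<bar>(a - s) + e\<bar> = (a - s) + e"
    using \<open>0 < a\<close> \<open>s \<le> 0\<close> \<open>0 < e\<close> by simp
  finally show "1 \<le> (a - s) + e"
    by simp
qed

lemma preserves_box_cone_quadrant:
  assumes "1 \<le> a - s" "1 \<le> d - s" "s \<le> 0" "0 < a" "0 < d"
    and "box_cone x y z" "0 < y"
  shows "box_cone x (a * y - s * z) (d * z - s * y)"
proof -
  have "0 < z"
    using \<open>box_cone x y z\<close> \<open>0 < y\<close> by (simp add: box_cone_def zero_less_mult_iff)
  have "s * y \<le> 0" "s * z \<le> 0" "0 < a * y" "0 < d * z"
    using assms(3-5) \<open>0 < y\<close> \<open>0 < z\<close> by (simp_all add: mult_nonpos_nonneg)
  then have "0 < a * y - s * z" "0 < d * z - s * y"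
    by simp_all
  moreover have "y + z \<le> (a * y - s * z) + (d * z - s * y)"
  proof -
    have "y + z \<le> (a - s) * y + (d - s) * z"
      using assms(1,2) \<open>0 < y\<close> \<open>0 < z\<close>
      by (intro add_mono) (simp_all add: mult_right_mono[of 1, simplified])
    then show ?thesis
      by (simp add: algebra_simps)
  qed
  ultimately show ?thesis
    using \<open>box_cone x y z\<close> \<open>0 < y\<close> \<open>0 < z\<close> by (simp add: box_cone_def)
qed

lemma preserves_box_cone_if:
  assumes "1 \<le> a - s" "1 \<le> d - s"
    and det: "a * d = 1 + s\<^sup>2" and "0 < a" "0 < d"
  shows "preserves_box_cone a s d"
proof -
  \<comment> \<open>by \<open>a d = 1 + s\<^sup>2\<close>, \<open>(a - s) (d - s) \<ge> 1\<close> reads \<open>s (a + d - 2 s) \<le> 0\<close>, and \<open>a + d - 2 s \<ge> 2\<close>\<close>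
  have "1 \<le> (a - s) * (d - s)"
    using assms(1,2) by (metis mult_mono' mult_1 zero_le_one)
  then have "s * (a + d - 2 * s) \<le> 0"
    using det by (simp add: algebra_simps power2_eq_square)
  moreover have "0 < a + d - 2 * s"
    using assms(1,2) by simp
  ultimately have "s \<le> 0"
    by (simp add: mult_le_0_iff)
  show ?thesis
    unfolding preserves_box_cone_def
  proof (intro allI impI)
    fix x y z
    assume cone: "box_cone x y z"
    show "box_cone x (a * y - s * z) (d * z - s * y)"
    proof (cases "0 < y")
      case True
      with cone show ?thesis
        using preserves_box_cone_quadrant assms \<open>s \<le> 0\<close> by blast
    next
      case False
      with cone have "box_cone x (- y) (- z)" "0 < - y"
        by (auto simp: box_cone_def zero_less_mult_iff)
      then have "box_cone x (a * - y - s * - z) (d * - z - s * - y)"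
        using preserves_box_cone_quadrant assms \<open>s \<le> 0\<close> by blast
      then show ?thesis
        by (simp flip: box_cone_uminus[of x "a * y - s * z"] add: algebra_simps)
    qed
  qed
qed

lemma preserves_box_cone_iff:
  assumes "a * d = 1 + s\<^sup>2" "0 < a" "0 < d"
  shows "preserves_box_cone a s d \<longleftrightarrow> 1 \<le> a - s \<and> 1 \<le> d - s"
  using assms preserves_box_cone_if preserves_box_cone_imp_ge
    preserves_box_cone_swap[of a s d] by (metis mult.commute)

lemma matrix_inv_left:
  fixes M :: "'a::semiring_1^'n^'n"
  assumes "invertible M"
  shows "matrix_inv M ** M = mat 1"
proof -
  have "\<exists>N. M ** N = mat 1 \<and> N ** M = mat 1"
    using assms unfolding invertible_def by blast
  then have "M ** matrix_inv M = mat 1 \<and> matrix_inv M ** M = mat 1"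
    unfolding matrix_inv_def by (rule someI_ex)
  then show ?thesis
    by blast
qed

lemma matrix_inv_mult_sigma_map:
  assumes "invertible M"
  shows "matrix_inv M *v sigma_map M \<epsilon> \<delta> v = Sigma_mat \<epsilon> \<delta> *v (matrix_inv M *v v)"
  using matrix_inv_left[OF assms]
  by (simp add: sigma_map_def matrix_vector_mul_assoc matrix_mul_assoc)

lemma Sigma_mat_mult_components:
  "(Sigma_mat \<epsilon> \<delta> *v c) $ 1 = c $ 1"
  "(Sigma_mat \<epsilon> \<delta> *v c) $ 2 = exp (- \<delta>) * cosh \<epsilon> * c $ 2 - sinh \<epsilon> * c $ 3"
  "(Sigma_mat \<epsilon> \<delta> *v c) $ 3 = exp \<delta> * cosh \<epsilon> * c $ 3 - sinh \<epsilon> * c $ 2"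
  by (simp_all add: Sigma_mat_def matrix_vector_mult_def sum_3)

lemma convex_interior_iff_box_cone:
  "v \<in> convex_interior M \<longleftrightarrow>
     box_cone ((matrix_inv M *v v) $ 1) ((matrix_inv M *v v) $ 2) ((matrix_inv M *v v) $ 3)"
  by (auto simp: convex_interior_def box_cone_def abs_diff_less_abs_add_iff Let_def)

lemma sigma_map_convex_interior_subset_iff:
  assumes "invertible M"
  shows "sigma_map M \<epsilon> \<delta> ` convex_interior M \<subseteq> convex_interior M \<longleftrightarrow>
    preserves_box_cone (exp (- \<delta>) * cosh \<epsilon>) (sinh \<epsilon>) (exp \<delta> * cosh \<epsilon>)"
proof -
  have coords: "matrix_inv M *v (M *v c) = c" for c
    using matrix_inv_left[OF assms] by (simp add: matrix_vector_mul_assoc)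
  define cone_maps_to_cone where "cone_maps_to_cone c \<longleftrightarrow>
    (box_cone (c $ 1) (c $ 2) (c $ 3) \<longrightarrow> box_cone (c $ 1)
       (exp (- \<delta>) * cosh \<epsilon> * c $ 2 - sinh \<epsilon> * c $ 3) (exp \<delta> * cosh \<epsilon> * c $ 3 - sinh \<epsilon> * c $ 2))"
    for c :: "real^3"
  have "sigma_map M \<epsilon> \<delta> ` convex_interior M \<subseteq> convex_interior M \<longleftrightarrow>
      (\<forall>v. cone_maps_to_cone (matrix_inv M *v v))"
    by (simp add: image_subset_iff Ball_def convex_interior_iff_box_cone cone_maps_to_cone_def
        matrix_inv_mult_sigma_map[OF assms] Sigma_mat_mult_components)
  also have "\<dots> \<longleftrightarrow> (\<forall>c. cone_maps_to_cone c)"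
    by (metis coords)
  also have "\<dots> \<longleftrightarrow> preserves_box_cone (exp (- \<delta>) * cosh \<epsilon>) (sinh \<epsilon>) (exp \<delta> * cosh \<epsilon>)"
    unfolding preserves_box_cone_def cone_maps_to_cone_def by (metis vector_3)
  finally show ?thesis .
qed

theorem proposition7p4:
  fixes p q r s t b P Q R S T B :: "real^3" and M :: "real^3^3" and \<epsilon> \<delta> :: real
  assumes "overmarked_box p q r s t b P Q R S T B"
    and "theta_basis M p q r s"
    and "convex_box M t b"
  shows "sigma_map M \<epsilon> \<delta> ` convex_interior M \<subseteq> convex_interior M
         \<longleftrightarrow> (\<epsilon>, \<delta>) \<in> region_R"
proof -
  have "invertible M"
    using assms(2) by (simp add: theta_basis_def)
  have det: "(exp (- \<delta>) * cosh \<epsilon>) * (exp \<delta> * cosh \<epsilon>) = 1 + (sinh \<epsilon>)\<^sup>2"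
  proof -
    have "(exp (- \<delta>) * cosh \<epsilon>) * (exp \<delta> * cosh \<epsilon>) = (cosh \<epsilon>)\<^sup>2"
      by (simp add: power2_eq_square exp_minus field_simps)
    then show ?thesis
      by (simp add: cosh_square_eq)
  qed
  have "(\<epsilon>, \<delta>) \<in> region_R \<longleftrightarrow>
      1 \<le> exp (- \<delta>) * cosh \<epsilon> - sinh \<epsilon> \<and> 1 \<le> exp \<delta> * cosh \<epsilon> - sinh \<epsilon>"
    by (simp add: region_R_def f_fun_def)
  then show ?thesis
    using preserves_box_cone_iff[OF det] sigma_map_convex_interior_subset_iff[OF \<open>invertible M\<close>]
    by simp
qed

end
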